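(* Let $s,y\in\mathbb{R}^n$ with $s^Ty>0$, let $\tau\in[0,1]$, and for $\alpha>0$ define $$\phi_\tau(\alpha)=\Big\|\tau\Big(\tfrac{1}{\alpha}s-y\Big)+(1-\tau)(s-\alpha y)\Big\|^2 .$$ Let $\alpha^{BB1}=\dfrac{s^Ts}{s^Ty}$ and $\alpha^{BB2}=\dfrac{s^Ty}{y^Ty}$. Then the equation $\phi_\tau'(\alpha)=0$ has a unique root in the interval $[\alpha^{BB2},\alpha^{BB1}]$.
   Context: $\|\cdot\|$ denotes the Euclidean norm and $\phi_\tau'$ the derivative of $\phi_\tau$ with respect to $\alpha$. (Note $s^Ty>0$ forces $y\neq 0$, and by Cauchy–Schwarz $\alpha^{BB2}\le\alpha^{BB1}$.) *)

theory Defs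
  imports "HOL-Analysis.Analysis"
begin

definition phi :: "real \<Rightarrow> real ^ 'n \<Rightarrow> real ^ 'n \<Rightarrow> real \<Rightarrow> real" where
  "phi \<tau> s y \<alpha> = (norm (\<tau> *\<^sub>R ((1 / \<alpha>) *\<^sub>R s - y) + (1 - \<tau>) *\<^sub>R (s - \<alpha> *\<^sub>R y)))\<^sup>2"

definition alpha_BB1 :: "real ^ 'n \<Rightarrow> real ^ 'n \<Rightarrow> real" where
  "alpha_BB1 s y = (s \<bullet> s) / (s \<bullet> y)"

definition alpha_BB2 :: "real ^ 'n \<Rightarrow> real ^ 'n \<Rightarrow> real" where
  "alpha_BB2 s y = (s \<bullet> y) / (y \<bullet> y)"

end

theory Submission
  imports Defs
begin

text \<open>For \<open>\<alpha> > 0\<close> the vector inside \<open>phi\<close> is \<open>((\<tau> + (1 - \<tau>) \<alpha>) / \<alpha>) (s - \<alpha> y)\<close>, so \<open>phi\<close>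
  is a rational function of \<open>\<alpha>\<close> in \<open>s \<bullet> s\<close>, \<open>s \<bullet> y\<close>, \<open>y \<bullet> y\<close>, and its derivative has the sign of
  the cubic \<open>crit_cubic\<close>. This cubic is strictly increasing from \<open>alpha_BB2\<close> on, and by
  Cauchy-Schwarz it is \<open>\<le> 0\<close> at \<open>alpha_BB2\<close> and \<open>\<ge> 0\<close> at \<open>alpha_BB1\<close>, so it has exactly one
  zero in between.\<close>

lemma ex1_root_strict_mono_on:
  fixes f :: "'a::linear_continuum_topology \<Rightarrow> 'b::linorder_topology"
  assumes "l \<le> u" "continuous_on {l..u} f" "strict_mono_on {l..u} f" "f l \<le> v" "v \<le> f u"
  shows "\<exists>!x. x \<in> {l..u} \<and> f x = v"
proof -
  obtain x where "l \<le> x" "x \<le> u" "f x = v"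
    using IVT'[of f l v u] assms by blast
  moreover have "inj_on f {l..u}"
    using assms(3) by (rule strict_mono_on_imp_inj_on)
  ultimately show ?thesis
    by (metis atLeastAtMost_iff inj_onD)
qed

definition crit_cubic :: "real \<Rightarrow> real \<Rightarrow> real \<Rightarrow> real \<Rightarrow> real \<Rightarrow> real" where
  "crit_cubic \<tau> a b c x = (1 - \<tau>) * x\<^sup>2 * (c * x - b) + \<tau> * (b * x - a)"

lemma crit_cubic_strict_mono_on:
  assumes "b > 0" "c > 0" "0 \<le> \<tau>" "\<tau> \<le> 1"
  shows "strict_mono_on {b/c..} (crit_cubic \<tau> a b c)"
proof (rule strict_mono_onI)
  fix x z assume "x \<in> {b/c..}" "z \<in> {b/c..}" "x < z"
  then have cx: "c * x \<ge> b" and cz: "c * z \<ge> b" and x: "x > 0"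
    using assms by (auto simp: field_simps intro: less_le_trans[of 0 "b/c"])
  define q where "q = c * (z\<^sup>2 + z * x + x\<^sup>2) - b * (z + x)"
  have "q = z * (c * z - b) + x * (c * x - b) + c * z * x"
    unfolding q_def by (simp add: algebra_simps power2_eq_square)
  also have "\<dots> > 0"
    using cx cz x \<open>x < z\<close> \<open>c > 0\<close> by (simp add: add_nonneg_pos)
  finally have "q > 0" .
  then have "(1 - \<tau>) * q + \<tau> * b > 0"
    using assms by (cases "\<tau> = 1") (auto intro: add_pos_nonneg add_nonneg_pos)
  moreover have "crit_cubic \<tau> a b c z - crit_cubic \<tau> a b c x = (z - x) * ((1 - \<tau>) * q + \<tau> * b)"
    unfolding crit_cubic_def q_def by (simp add: algebra_simps power2_eq_square)
  ultimately show "crit_cubic \<tau> a b c x < crit_cubic \<tau> a b c z"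
    using \<open>x < z\<close> by (metis diff_gt_0_iff_gt mult_pos_pos)
qed

lemma crit_cubic_lower_nonpos:
  assumes "b\<^sup>2 \<le> a * c" "c > 0" "0 \<le> \<tau>"
  shows "crit_cubic \<tau> a b c (b/c) \<le> 0"
proof -
  have "crit_cubic \<tau> a b c (b/c) = \<tau> * (b * (b/c) - a)"
    using assms by (simp add: crit_cubic_def)
  moreover have "b * (b/c) - a \<le> 0"
    using assms by (simp add: field_simps power2_eq_square)
  ultimately show ?thesis
    using assms by (simp add: mult_nonneg_nonpos)
qed

lemma crit_cubic_upper_nonneg:
  assumes "b\<^sup>2 \<le> a * c" "b > 0" "\<tau> \<le> 1"
  shows "crit_cubic \<tau> a b c (a/b) \<ge> 0"
proof -
  have "c * (a/b) - b \<ge> 0"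
    using assms by (simp add: field_simps power2_eq_square)
  then show ?thesis
    using assms by (simp add: crit_cubic_def)
qed

lemma phi_eq_rational:
  fixes s y :: "real ^ 'n"
  assumes "\<alpha> > 0"
  shows "phi \<tau> s y \<alpha> = (\<tau> + (1 - \<tau>) * \<alpha>)\<^sup>2 * (s \<bullet> s - 2 * (s \<bullet> y) * \<alpha> + (y \<bullet> y) * \<alpha>\<^sup>2) / \<alpha>\<^sup>2"
proof -
  have "\<tau> *\<^sub>R ((1 / \<alpha>) *\<^sub>R s - y) + (1 - \<tau>) *\<^sub>R (s - \<alpha> *\<^sub>R y)
      = ((\<tau> + (1 - \<tau>) * \<alpha>) / \<alpha>) *\<^sub>R (s - \<alpha> *\<^sub>R y)"
    using assms by (simp add: vec_eq_iff field_simps)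
  moreover have "(norm (s - \<alpha> *\<^sub>R y))\<^sup>2 = s \<bullet> s - 2 * (s \<bullet> y) * \<alpha> + (y \<bullet> y) * \<alpha>\<^sup>2"
    unfolding power2_norm_eq_inner
    by (simp add: inner_diff_left inner_diff_right inner_commute power2_eq_square algebra_simps)
  ultimately show ?thesis
    using assms by (simp add: phi_def power_mult_distrib power_divide)
qed

lemma phi_has_real_derivative:
  fixes s y :: "real ^ 'n"
  assumes "\<alpha> > 0"
  shows "(phi \<tau> s y has_real_derivative
      2 * (\<tau> + (1 - \<tau>) * \<alpha>) * crit_cubic \<tau> (s \<bullet> s) (s \<bullet> y) (y \<bullet> y) \<alpha> / \<alpha> ^ 3) (at \<alpha>)"
proof -
  define a b c where "a = s \<bullet> s" and "b = s \<bullet> y" and "c = y \<bullet> y"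
  have "((\<lambda>x. (\<tau> + (1 - \<tau>) * x)\<^sup>2 * (a - 2 * b * x + c * x\<^sup>2) / x\<^sup>2) has_real_derivative
      2 * (\<tau> + (1 - \<tau>) * \<alpha>) * crit_cubic \<tau> a b c \<alpha> / \<alpha> ^ 3) (at \<alpha>)"
    unfolding crit_cubic_def using assms
    by (auto intro!: derivative_eq_intros simp: divide_simps eval_nat_numeral) algebra
  then show ?thesis
    unfolding a_def b_def c_def
    by (rule has_field_derivative_transform_within_open[where S = "{0<..}"])
       (use assms in \<open>auto simp: phi_eq_rational\<close>)
qed

lemma deriv_phi_eq_0_iff:
  fixes s y :: "real ^ 'n"
  assumes "\<alpha> > 0" "0 \<le> \<tau>" "\<tau> \<le> 1"
  shows "deriv (phi \<tau> s y) \<alpha> = 0 \<longleftrightarrow> crit_cubic \<tau> (s \<bullet> s) (s \<bullet> y) (y \<bullet> y) \<alpha> = 0"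
proof -
  have "\<tau> + (1 - \<tau>) * \<alpha> > 0"
    using assms by (cases "\<tau> = 0") (auto intro: add_pos_nonneg)
  with assms show ?thesis
    by (simp add: DERIV_imp_deriv[OF phi_has_real_derivative])
qed

theorem proposition1:
  fixes s y :: "real ^ 'n" and \<tau> :: real
  assumes "s \<bullet> y > 0" and "0 \<le> \<tau>" and "\<tau> \<le> 1"
  shows "\<exists>!\<alpha>. \<alpha> \<in> {alpha_BB2 s y .. alpha_BB1 s y} \<and> deriv (phi \<tau> s y) \<alpha> = 0"
proof -
  define a b c where "a = s \<bullet> s" and "b = s \<bullet> y" and "c = y \<bullet> y"
  have b: "b > 0" and c: "c > 0"
    using assms(1) by (auto simp: b_def c_def)
  have cs: "b\<^sup>2 \<le> a * c"
    unfolding a_def b_def c_def by (rule Cauchy_Schwarz_ineq)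
  have "b/c \<le> a/b"
    using cs b c by (simp add: field_simps power2_eq_square)
  then have "\<exists>!\<alpha>. \<alpha> \<in> {b/c..a/b} \<and> crit_cubic \<tau> a b c \<alpha> = 0"
    using b c assms cs
    by (intro ex1_root_strict_mono_on crit_cubic_lower_nonpos crit_cubic_upper_nonneg
        monotone_on_subset[OF crit_cubic_strict_mono_on])
       (auto simp: crit_cubic_def intro!: continuous_intros)
  moreover have "\<alpha> > 0" if "\<alpha> \<in> {b/c..a/b}" for \<alpha>
    using that b c by (auto intro: less_le_trans[of 0 "b/c"])
  ultimately show ?thesis
    using assms by (simp add: alpha_BB1_def alpha_BB2_def a_def b_def c_def deriv_phi_eq_0_iff cong: conj_cong)
qed

end
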